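(* Let $X$ be a real Banach lattice equipped with a sufficiently rich topology $\tau$. If $C\subseteq X_+$ is $\tau$-compact, then its solid hull $\operatorname{so}(C)$ is $\tau$-closed.
   Context: A locally convex Hausdorff topology $\tau$ on a Banach lattice $X$ is called sufficiently rich if (i) the space $X^\tau$ of $\tau$-continuous linear functionals on $X$ is a Banach lattice (with lattice operations given by the Riesz–Kantorovich formulas), and (ii) $X_+$ is $\tau$-closed. $\operatorname{so}(C)$ is the set of all $z\in X$ for which there exists $x\in C$ with $|z|\le|x|$ (the smallest solid set containing $C$). *)

theory Defs
  imports "HOL-Analysis.Analysis"
begin

definition labs :: "'a::{lattice, ab_group_add} \<Rightarrow> 'a" where
  "labs x = sup x (- x)"

class banach_lattice = banach + ordered_real_vector + lattice +
  assumes lattice_norm: "sup x (- x) \<le> sup y (- y) \<Longrightarrow> norm x \<le> norm y"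

definition so :: "'a::banach_lattice set \<Rightarrow> 'a set" where
  "so C = {z. \<exists>x\<in>C. labs z \<le> labs x}"

definition lc_hausdorff_linear_topology :: "'a::real_vector topology \<Rightarrow> bool" where
  "lc_hausdorff_linear_topology \<tau> \<longleftrightarrow>
     topspace \<tau> = UNIV \<and> Hausdorff_space \<tau> \<and>
     continuous_map (prod_topology \<tau> \<tau>) \<tau> (\<lambda>(x, y). x + y) \<and>
     continuous_map (prod_topology euclideanreal \<tau>) \<tau> (\<lambda>(a, x). a *\<^sub>R x) \<and>
     (\<forall>U. openin \<tau> U \<and> 0 \<in> U \<longrightarrow> (\<exists>V. openin \<tau> V \<and> 0 \<in> V \<and> convex V \<and> V \<subseteq> U))"

definition tdual :: "'a::real_vector topology \<Rightarrow> ('a \<Rightarrow> real) set" where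
  "tdual \<tau> = {f. linear f \<and> continuous_map \<tau> euclideanreal f}"

text \<open>Riesz--Kantorovich formulas: positive part and modulus of a functional,
  on positive elements.\<close>
definition rk_pos :: "('a::banach_lattice \<Rightarrow> real) \<Rightarrow> 'a \<Rightarrow> real" where
  "rk_pos f x = Sup {f y | y. 0 \<le> y \<and> y \<le> x}"

definition rk_abs :: "('a::banach_lattice \<Rightarrow> real) \<Rightarrow> 'a \<Rightarrow> real" where
  "rk_abs f x = Sup {\<bar>f y\<bar> | y. labs y \<le> x}"

text \<open>\<open>X^\<tau>\<close> is a Banach lattice with the Riesz--Kantorovich lattice operations:
  every \<open>f \<in> X^\<tau>\<close> is order bounded and the Riesz--Kantorovich positive part of \<open>f\<close>
  (hence all Riesz--Kantorovich lattice operations) exists in \<open>X^\<tau>\<close>; and there is a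
  complete lattice norm on \<open>X^\<tau>\<close> (w.r.t. the order \<open>f \<le> g \<longleftrightarrow> f x \<le> g x\<close> for \<open>x \<ge> 0\<close>).\<close>
definition dual_is_banach_lattice :: "'a::banach_lattice topology \<Rightarrow> bool" where
  "dual_is_banach_lattice \<tau> \<longleftrightarrow>
     (\<forall>f\<in>tdual \<tau>. (\<forall>x. 0 \<le> x \<longrightarrow> bdd_above {f y | y. 0 \<le> y \<and> y \<le> x}) \<and>
        (\<exists>h\<in>tdual \<tau>. \<forall>x. 0 \<le> x \<longrightarrow> h x = rk_pos f x)) \<and>
     (\<exists>N :: ('a \<Rightarrow> real) \<Rightarrow> real.
        (\<forall>f\<in>tdual \<tau>. N f \<ge> 0 \<and> (N f = 0 \<longleftrightarrow> f = (\<lambda>_. 0))) \<and>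
        (\<forall>f\<in>tdual \<tau>. \<forall>c. N (\<lambda>x. c * f x) = \<bar>c\<bar> * N f) \<and>
        (\<forall>f\<in>tdual \<tau>. \<forall>g\<in>tdual \<tau>. N (\<lambda>x. f x + g x) \<le> N f + N g) \<and>
        (\<forall>f\<in>tdual \<tau>. \<forall>g\<in>tdual \<tau>.
            (\<forall>x. 0 \<le> x \<longrightarrow> rk_abs f x \<le> rk_abs g x) \<longrightarrow> N f \<le> N g) \<and>
        (\<forall>s. (\<forall>n. s n \<in> tdual \<tau>) \<and>
             (\<forall>e>0. \<exists>M. \<forall>m\<ge>M. \<forall>n\<ge>M. N (\<lambda>x. s m x - s n x) < e) \<longrightarrow>
             (\<exists>f\<in>tdual \<tau>. (\<lambda>n. N (\<lambda>x. s n x - f x)) \<longlonglongrightarrow> 0)))"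

definition sufficiently_rich :: "'a::banach_lattice topology \<Rightarrow> bool" where
  "sufficiently_rich \<tau> \<longleftrightarrow>
     lc_hausdorff_linear_topology \<tau> \<and> dual_is_banach_lattice \<tau> \<and>
     closedin \<tau> {x. 0 \<le> x}"

end

theory Submission
  imports Defs
begin

text \<open>For \<open>C \<subseteq> X\<^sub>+\<close> the solid hull is the projection of \<open>{(z, x). x \<in> C \<and> \<bar>z\<bar> \<le> x}\<close>, and
  \<open>\<bar>z\<bar> \<le> x\<close> means \<open>x - z \<ge> 0\<close> and \<open>x + z \<ge> 0\<close>, both \<open>\<tau>\<close>-closed conditions. Projecting a closed
  subset of \<open>X \<times> C\<close> along the compact factor \<open>C\<close> yields a closed set.\<close>

lemma labs_le_iff:
  fixes z x :: "'a::{lattice, ordered_ab_group_add}"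
  shows "labs z \<le> x \<longleftrightarrow> 0 \<le> x - z \<and> 0 \<le> x + z"
  unfolding labs_def
  by (metis add.commute diff_ge_0_iff_ge le_sup_iff minus_add_cancel diff_minus_eq_add)

lemma labs_of_nonneg:
  fixes x :: "'a::{lattice, ordered_ab_group_add}"
  assumes "0 \<le> x"
  shows "labs x = x"
proof -
  have "- x \<le> x" using assms by (meson neg_le_0_iff_le order_trans)
  then show ?thesis unfolding labs_def by (simp add: sup_absorb1)
qed

lemma so_eq_fst_image:
  assumes "C \<subseteq> {x. 0 \<le> x}"
  shows "so C = fst ` {(z, x). x \<in> C \<and> labs z \<le> x}"
proof
  show "so C \<subseteq> fst ` {(z, x). x \<in> C \<and> labs z \<le> x}"
  proof
    fix z assume "z \<in> so C"
    then obtain x where "x \<in> C" "labs z \<le> labs x" unfolding so_def by blast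
    with assms have "(z, x) \<in> {(z, x). x \<in> C \<and> labs z \<le> x}"
      by (auto simp: labs_of_nonneg)
    then show "z \<in> fst ` {(z, x). x \<in> C \<and> labs z \<le> x}" by force
  qed
  show "fst ` {(z, x). x \<in> C \<and> labs z \<le> x} \<subseteq> so C"
  proof
    fix z assume "z \<in> fst ` {(z, x). x \<in> C \<and> labs z \<le> x}"
    then obtain x where "x \<in> C" "labs z \<le> x" by force
    with assms show "z \<in> so C" unfolding so_def by (metis labs_of_nonneg mem_Collect_eq subsetD)
  qed
qed

lemma continuous_map_add_topology:
  assumes "continuous_map (prod_topology \<tau> \<tau>) \<tau> (\<lambda>(x, y). x + y)"
    and "continuous_map X \<tau> f" and "continuous_map X \<tau> g"
  shows "continuous_map X \<tau> (\<lambda>p. f p + g p)"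
  using continuous_map_compose[of X "prod_topology \<tau> \<tau>" "\<lambda>p. (f p, g p)", OF _ assms(1)] assms(2,3)
  by (simp add: continuous_map_pairwise o_def)

lemma continuous_map_diff_topology:
  fixes f g :: "_ \<Rightarrow> 'a::real_vector"
  assumes "continuous_map (prod_topology \<tau> \<tau>) \<tau> (\<lambda>(x, y). x + y)"
    and "continuous_map (prod_topology euclideanreal \<tau>) \<tau> (\<lambda>(a, x). a *\<^sub>R x)"
    and "continuous_map X \<tau> f" and "continuous_map X \<tau> g"
  shows "continuous_map X \<tau> (\<lambda>p. f p - g p)"
proof -
  have "continuous_map X \<tau> (\<lambda>p. (-1::real) *\<^sub>R g p)"
    using continuous_map_compose[of X "prod_topology euclideanreal \<tau>" "\<lambda>p. (-1, g p)", OF _ assms(2)]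
      assms(4)
    by (simp add: continuous_map_pairwise o_def)
  from continuous_map_add_topology[OF assms(1,3) this] show ?thesis by simp
qed

lemma closedin_labs_le_graph:
  fixes \<tau> :: "'a::banach_lattice topology"
  assumes "lc_hausdorff_linear_topology \<tau>" and "closedin \<tau> {x. 0 \<le> x}"
  shows "closedin (prod_topology \<tau> (subtopology \<tau> C)) {(z, x). x \<in> C \<and> labs z \<le> x}"
proof -
  let ?P = "prod_topology \<tau> (subtopology \<tau> C)"
  have top: "topspace \<tau> = UNIV"
    and add: "continuous_map (prod_topology \<tau> \<tau>) \<tau> (\<lambda>(x, y). x + y)"
    and smult: "continuous_map (prod_topology euclideanreal \<tau>) \<tau> (\<lambda>(a, x). a *\<^sub>R x)"
    using assms(1) unfolding lc_hausdorff_linear_topology_def by auto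
  have fst: "continuous_map ?P \<tau> fst"
    by (rule continuous_map_fst)
  have snd: "continuous_map ?P \<tau> snd"
    using continuous_map_snd continuous_map_from_subtopology
    by (metis continuous_map_compose continuous_map_id continuous_map_in_subtopology id_comp)
  have "closedin ?P ({p \<in> topspace ?P. snd p - fst p \<in> {x. 0 \<le> x}}
                   \<inter> {p \<in> topspace ?P. snd p + fst p \<in> {x. 0 \<le> x}})"
    by (intro closedin_Int closedin_continuous_map_preimage[OF _ assms(2)]
        continuous_map_diff_topology[OF add smult snd fst]
        continuous_map_add_topology[OF add snd fst])
  moreover have "{p \<in> topspace ?P. snd p - fst p \<in> {x. 0 \<le> x}}
                   \<inter> {p \<in> topspace ?P. snd p + fst p \<in> {x. 0 \<le> x}}
               = {(z, x). x \<in> C \<and> labs z \<le> x}"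
    by (auto simp: top labs_le_iff)
  ultimately show ?thesis by simp
qed

theorem mainTheorem10:
  fixes \<tau> :: "'a::banach_lattice topology" and C :: "'a set"
  assumes "sufficiently_rich \<tau>"
    and "C \<subseteq> {x. 0 \<le> x}"
    and "compactin \<tau> C"
  shows "closedin \<tau> (so C)"
proof -
  have "compact_space (subtopology \<tau> C)"
    using assms(3) by (simp add: compact_space_subtopology)
  moreover have "closedin (prod_topology \<tau> (subtopology \<tau> C)) {(z, x). x \<in> C \<and> labs z \<le> x}"
    using assms(1) unfolding sufficiently_rich_def by (blast intro: closedin_labs_le_graph)
  ultimately have "closedin \<tau> (fst ` {(z, x). x \<in> C \<and> labs z \<le> x})"
    using closed_map_fst unfolding closed_map_def by blast
  then show ?thesis
    using so_eq_fst_image[OF assms(2)] by simp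
qed

end
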